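(* Let $T$ be a spherically homogeneous rooted tree in which every vertex has at least $2$ children, and let $G\le\mathrm{Aut}~T$ be a finitely generated branch group which contains a non-trivial element of finite order. Then $G$ does not have property $\mathrm{(LR)}$.
   Context: $\mathrm{Aut}~T$ is the group of automorphisms of $T$ fixing the root; $\mathcal{L}_n$ is the $n$th level; $T_v$ is the subtree of descendants of $v$. For $G\le\mathrm{Aut}~T$, $\mathrm{rist}_G(v)$ is the subgroup of elements of $G$ fixing every vertex outside $T_v$, and $\mathrm{Rist}_G(n)=\prod_{v\in\mathcal{L}_n}\mathrm{rist}_G(v)$. $G$ is level-transitive if it is transitive on each level; $G$ is branch if it is level-transitive and each $\mathrm{Rist}_G(n)$ has finite index in $G$. $H\le G$ is a virtual retract of $G$ if there is a finite-index $K\le G$ containing $H$ and a homomorphism $K\to H$ that is the identity on $H$; $G$ has $\mathrm{(LR)}$ if every finitely generated subgroup is a virtual retract of $G$. *)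

theory Defs
  imports "HOL-Algebra.Algebra"
begin

text \<open>A spherically homogeneous rooted tree with branching sequence m: vertices at level n
  are the words v of length n with v!i < m i; the root is the empty word.\<close>

definition tree :: "(nat \<Rightarrow> nat) \<Rightarrow> nat list set" where
  "tree m = {v. \<forall>i<length v. v ! i < m i}"

definition level :: "(nat \<Rightarrow> nat) \<Rightarrow> nat \<Rightarrow> nat list set" where
  "level m n = {v \<in> tree m. length v = n}"

definition desc :: "nat list \<Rightarrow> nat list \<Rightarrow> bool" where
  "desc v w \<longleftrightarrow> take (length v) w = v"

text \<open>Tree automorphisms (automatically fixing the root), normalized to be the identity
  outside the tree.\<close>
definition is_aut :: "(nat \<Rightarrow> nat) \<Rightarrow> (nat list \<Rightarrow> nat list) \<Rightarrow> bool" where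
  "is_aut m g \<longleftrightarrow> bij_betw g (tree m) (tree m)
     \<and> (\<forall>v\<in>tree m. length (g v) = length v \<and> (\<forall>k. g (take k v) = take k (g v)))
     \<and> (\<forall>v. v \<notin> tree m \<longrightarrow> g v = v)"

definition AutT :: "(nat \<Rightarrow> nat) \<Rightarrow> (nat list \<Rightarrow> nat list) monoid" where
  "AutT m = \<lparr>carrier = {g. is_aut m g}, monoid.mult = (\<circ>), one = id\<rparr>"

definition grp :: "(nat \<Rightarrow> nat) \<Rightarrow> (nat list \<Rightarrow> nat list) set \<Rightarrow> (nat list \<Rightarrow> nat list) monoid" where
  "grp m G = (AutT m)\<lparr>carrier := G\<rparr>"

definition rist :: "(nat \<Rightarrow> nat) \<Rightarrow> (nat list \<Rightarrow> nat list) set \<Rightarrow> nat list \<Rightarrow> (nat list \<Rightarrow> nat list) set" where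
  "rist m G v = {g \<in> G. \<forall>w \<in> tree m. \<not> desc v w \<longrightarrow> g w = w}"

text \<open>Rist_G(n): the product of the (pairwise commuting) rigid stabilisers of level n,
  i.e. the subgroup they generate.\<close>
definition Rist :: "(nat \<Rightarrow> nat) \<Rightarrow> (nat list \<Rightarrow> nat list) set \<Rightarrow> nat \<Rightarrow> (nat list \<Rightarrow> nat list) set" where
  "Rist m G n = generate (AutT m) (\<Union>v \<in> level m n. rist m G v)"

definition finite_index :: "(nat \<Rightarrow> nat) \<Rightarrow> (nat list \<Rightarrow> nat list) set \<Rightarrow> (nat list \<Rightarrow> nat list) set \<Rightarrow> bool" where
  "finite_index m G K \<longleftrightarrow> finite (rcosets\<^bsub>grp m G\<^esub> K)"

definition level_transitive :: "(nat \<Rightarrow> nat) \<Rightarrow> (nat list \<Rightarrow> nat list) set \<Rightarrow> bool" where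
  "level_transitive m G \<longleftrightarrow> (\<forall>n. \<forall>v \<in> level m n. \<forall>w \<in> level m n. \<exists>g \<in> G. g v = w)"

definition branch :: "(nat \<Rightarrow> nat) \<Rightarrow> (nat list \<Rightarrow> nat list) set \<Rightarrow> bool" where
  "branch m G \<longleftrightarrow> level_transitive m G \<and> (\<forall>n. finite_index m G (Rist m G n))"

definition fin_gen :: "(nat \<Rightarrow> nat) \<Rightarrow> (nat list \<Rightarrow> nat list) set \<Rightarrow> bool" where
  "fin_gen m H \<longleftrightarrow> (\<exists>S. finite S \<and> S \<subseteq> H \<and> generate (AutT m) S = H)"

definition virtual_retract :: "(nat \<Rightarrow> nat) \<Rightarrow> (nat list \<Rightarrow> nat list) set \<Rightarrow> (nat list \<Rightarrow> nat list) set \<Rightarrow> bool" where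
  "virtual_retract m G H \<longleftrightarrow> (\<exists>K. subgroup K (grp m G) \<and> H \<subseteq> K \<and> finite_index m G K \<and>
     (\<exists>r. r \<in> hom (grp m K) (grp m H) \<and> (\<forall>h\<in>H. r h = h)))"

definition LR :: "(nat \<Rightarrow> nat) \<Rightarrow> (nat list \<Rightarrow> nat list) set \<Rightarrow> bool" where
  "LR m G \<longleftrightarrow> (\<forall>H. subgroup H (grp m G) \<and> fin_gen m H \<longrightarrow> virtual_retract m G H)"

end

theory Submission
  imports Defs
begin

(*
  Let a in G have prime order p and let u be a vertex moved by a; then the vertices a^i u,
  i < p, are distinct. For q in rist_G(u) let diag q be the product of the conjugates
  a^i q a^-i. Since G is finitely generated and branch, rist_G(u) is finitely generated
  (Schreier's lemma for Rist_G(|u|), then restriction below u), hence so is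
  H = <a, diag(rist_G(u))>. Every element of H permutes the subtrees below the orbit of u
  cyclically and acts on each of them by one and the same element of rist_G(u).

  Suppose r : K -> H is a retraction, K of finite index. Finite-index subgroups meet every
  rigid stabiliser nontrivially; pick such a k in K and rist_G(u). Being diagonal, r k cannot
  agree with k below the whole orbit of u, so the kernel N of r moves a vertex there. A
  commutator argument produces a nontrivial t in N and rist_G(u), and then diag t is a
  nontrivial element of N and H, although r is the identity on H.
*)

section \<open>Finite-index subgroups and elements of prime order\<close>

lemma (in group) right_transversal:
  assumes K: "subgroup K G" and H: "subgroup H G"
  obtains \<tau> where "\<And>g. g \<in> H \<Longrightarrow> \<tau> g \<in> H" "\<And>g. g \<in> H \<Longrightarrow> K #> \<tau> g = K #> g"
    "\<And>g. g \<in> H \<Longrightarrow> \<tau> g \<in> K \<Longrightarrow> \<tau> g = \<one>"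
    "finite ((\<lambda>g. K #> g) ` H) \<Longrightarrow> finite (\<tau> ` H)"
proof -
  define rep where "rep C = (if C = K then \<one> else SOME t. t \<in> H \<and> C = K #> t)" for C
  define \<tau> where "\<tau> g = rep (K #> g)" for g
  have K_carrier: "K \<subseteq> carrier G" using subgroup.subset[OF K] .
  have rep: "\<tau> g \<in> H \<and> K #> \<tau> g = K #> g" if g: "g \<in> H" for g
  proof (cases "K #> g = K")
    case True
    then show ?thesis using K_carrier subgroup.one_closed[OF H] by (simp add: \<tau>_def rep_def)
  next
    case False
    have "\<exists>t. t \<in> H \<and> K #> g = K #> t" using g by blast
    then have "(SOME t. t \<in> H \<and> K #> g = K #> t) \<in> H \<and> K #> g = K #> (SOME t. t \<in> H \<and> K #> g = K #> t)"
      by (rule someI_ex)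
    then show ?thesis using False by (simp add: \<tau>_def rep_def)
  qed
  have rep_K: "\<tau> g = \<one>" if g: "g \<in> H" and K_mem: "\<tau> g \<in> K" for g
  proof -
    have "K #> g = K"
      using rep[OF g] subgroup.rcos_const[OF K is_group K_mem] by simp
    then show ?thesis by (simp add: \<tau>_def rep_def)
  qed
  have "\<tau> ` H = rep ` (\<lambda>g. K #> g) ` H" by (simp add: \<tau>_def image_image)
  then have "finite ((\<lambda>g. K #> g) ` H) \<Longrightarrow> finite (\<tau> ` H)" by simp
  with rep rep_K that[of \<tau>] show thesis by blast
qed

lemma (in group) generate_right_mult_closed:
  assumes S: "S \<subseteq> carrier G" and M: "M \<subseteq> carrier G"
    and step: "\<And>x s. x \<in> M \<Longrightarrow> s \<in> S \<Longrightarrow> x \<otimes> s \<in> M \<and> x \<otimes> inv s \<in> M"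
    and g: "g \<in> generate G S"
  shows "x \<in> M \<Longrightarrow> x \<otimes> g \<in> M"
  using g
proof (induct g arbitrary: x rule: generate.induct)
  case one
  then show ?case using M by auto
next
  case (incl s)
  then show ?case using step by blast
next
  case (inv s)
  then show ?case using step by blast
next
  case (eng g1 g2)
  then have "x \<otimes> g1 \<otimes> g2 \<in> M" by blast
  then show ?case
    using M eng(1,3,5) generate_incl[OF S] by (simp add: m_assoc subset_iff)
qed

definition (in group) schreier_generators :: "('a \<Rightarrow> 'a) \<Rightarrow> 'a set \<Rightarrow> 'a set" where
  "schreier_generators \<tau> S =
     (\<lambda>(t, s). t \<otimes> s \<otimes> inv \<tau> (t \<otimes> s)) ` (\<tau> ` generate G S \<times> (S \<union> m_inv G ` S))"

lemma (in group) schreier_generators_subset: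
  assumes S: "S \<subseteq> carrier G" and K: "subgroup K G"
    and \<tau>: "\<And>g. g \<in> generate G S \<Longrightarrow> \<tau> g \<in> generate G S"
      "\<And>g. g \<in> generate G S \<Longrightarrow> K #> \<tau> g = K #> g"
  shows "schreier_generators \<tau> S \<subseteq> K"
proof (clarsimp simp: schreier_generators_def simp del: Un_iff)
  fix t s assume ts: "t \<in> generate G S" "s \<in> S \<union> m_inv G ` S"
  have "\<tau> t \<otimes> s \<in> generate G S"
    using subgroup.m_closed[OF generate_is_subgroup[OF S] \<tau>(1)[OF ts(1)]] ts(2)
    by (blast intro: generate.incl generate.inv)
  moreover have "\<tau> t \<otimes> s \<in> K #> \<tau> t \<otimes> s"
    using rcos_self[OF _ K] calculation generate_incl[OF S] by blast
  ultimately show "\<tau> t \<otimes> s \<otimes> inv \<tau> (\<tau> t \<otimes> s) \<in> K"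
    using subgroup.rcos_module_imp[OF K is_group] \<tau> generate_incl[OF S] by (metis subsetD)
qed

lemma (in group) schreier_product_step:
  assumes S: "S \<subseteq> carrier G" and \<tau>: "\<And>g. g \<in> generate G S \<Longrightarrow> \<tau> g \<in> generate G S"
    and y: "y \<in> generate G (schreier_generators \<tau> S)" and t: "t \<in> \<tau> ` generate G S"
    and s: "s \<in> S \<union> m_inv G ` S"
  shows "\<exists>y' t'. y \<otimes> t \<otimes> s = y' \<otimes> t' \<and> y' \<in> generate G (schreier_generators \<tau> S) \<and> t' \<in> \<tau> ` generate G S"
proof (intro exI conjI)
  let ?r = "\<tau> (t \<otimes> s)"
  have prod_H: "t' \<otimes> s' \<in> generate G S" if "t' \<in> \<tau> ` generate G S" "s' \<in> S \<union> m_inv G ` S" for t' s'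
    using subgroup.m_closed[OF generate_is_subgroup[OF S]] that \<tau>
    by (blast intro: generate.incl generate.inv)
  then have ts_H: "t \<otimes> s \<in> generate G S" using t s .
  have "t' \<otimes> s' \<otimes> inv \<tau> (t' \<otimes> s') \<in> carrier G"
    if "t' \<in> \<tau> ` generate G S" "s' \<in> S \<union> m_inv G ` S" for t' s'
    using prod_H[OF that] \<tau> generate_incl[OF S] by blast
  then have Y_carrier: "schreier_generators \<tau> S \<subseteq> carrier G"
    unfolding schreier_generators_def by auto
  have c: "y \<in> carrier G" "t \<in> carrier G" "s \<in> carrier G" "?r \<in> carrier G"
    using generate_incl[OF Y_carrier] y t ts_H generate_incl[OF S] \<tau> s S by blast+
  show "y \<otimes> t \<otimes> s = y \<otimes> (t \<otimes> s \<otimes> inv ?r) \<otimes> ?r"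
    using c by (simp add: m_assoc)
  have "t \<otimes> s \<otimes> inv ?r \<in> schreier_generators \<tau> S"
    using t s unfolding schreier_generators_def by (intro image_eqI[of _ _ "(t, s)"]) auto
  then show "y \<otimes> (t \<otimes> s \<otimes> inv ?r) \<in> generate G (schreier_generators \<tau> S)"
    using generate.eng[OF y generate.incl] by blast
  show "?r \<in> \<tau> ` generate G S" using ts_H by blast
qed

text \<open>Schreier: the products \<open>y \<otimes> t\<close> with \<open>t\<close> in the transversal and \<open>y\<close> generated by the
  Schreier generators form a set that is stable under right multiplication by the generators and
  contains \<open>\<one>\<close>; hence it contains \<open>K\<close>, and \<open>t = \<one>\<close> whenever \<open>y \<otimes> t \<in> K\<close>.\<close>

lemma (in group) generate_schreier_generators:
  assumes S: "S \<subseteq> carrier G" and K: "subgroup K G" "K \<subseteq> generate G S"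
    and \<tau>: "\<And>g. g \<in> generate G S \<Longrightarrow> \<tau> g \<in> generate G S"
      "\<And>g. g \<in> generate G S \<Longrightarrow> K #> \<tau> g = K #> g"
      "\<And>g. g \<in> generate G S \<Longrightarrow> \<tau> g \<in> K \<Longrightarrow> \<tau> g = \<one>"
  shows "generate G (schreier_generators \<tau> S) = K"
proof
  let ?H = "generate G S" and ?T = "\<tau> ` generate G S" and ?Y = "schreier_generators \<tau> S"
  have H: "subgroup ?H G" using generate_is_subgroup[OF S] .
  have H_carrier: "?H \<subseteq> carrier G" using generate_incl[OF S] .
  have T_H: "?T \<subseteq> ?H" using \<tau>(1) by blast
  have Y_K: "?Y \<subseteq> K" using schreier_generators_subset[OF S K(1) \<tau>(1,2)] .
  then show "generate G ?Y \<subseteq> K" using generate_subgroup_incl[OF _ K(1)] by blast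
  have GY_carrier: "generate G ?Y \<subseteq> carrier G"
    using generate_incl Y_K subgroup.subset[OF K(1)] by blast
  define M where "M = {y \<otimes> t | y t. y \<in> generate G ?Y \<and> t \<in> ?T}"
  have M_carrier: "M \<subseteq> carrier G"
    unfolding M_def using GY_carrier T_H H_carrier by (auto intro!: m_closed)
  have M_step: "x \<otimes> s \<in> M" if "x \<in> M" "s \<in> S \<union> m_inv G ` S" for x s
  proof -
    obtain y t where yt: "x = y \<otimes> t" "y \<in> generate G ?Y" "t \<in> ?T" using \<open>x \<in> M\<close> M_def by blast
    have "\<exists>y' t'. y \<otimes> t \<otimes> s = y' \<otimes> t' \<and> y' \<in> generate G ?Y \<and> t' \<in> ?T"
      by (rule schreier_product_step[of S \<tau> y t s]) (use S \<tau>(1) yt that(2) in auto)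
    then show ?thesis unfolding M_def yt(1) by blast
  qed
  have one_H: "\<one> \<in> ?H" using subgroup.one_closed[OF H] .
  have "\<tau> \<one> \<in> K"
    using rcos_self[OF _ K(1), of "\<tau> \<one>"] \<tau>(1,2)[OF one_H] H_carrier subgroup.subset[OF K(1)] by auto
  then have "\<one> \<otimes> \<one> \<in> M" using \<tau>(3)[OF one_H] one_H generate.one unfolding M_def by force
  show "K \<subseteq> generate G ?Y"
  proof
    fix k assume k: "k \<in> K"
    have k_carrier: "k \<in> carrier G" using k subgroup.subset[OF K(1)] by blast
    have "\<one> \<otimes> k \<in> M"
      using generate_right_mult_closed[OF S M_carrier _ subsetD[OF K(2) k]] \<open>\<one> \<otimes> \<one> \<in> M\<close> M_step
      by simp
    then obtain y t where yt: "k = y \<otimes> t" "y \<in> generate G ?Y" "t \<in> ?T"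
      using k_carrier unfolding M_def by auto
    have c: "y \<in> carrier G" "t \<in> carrier G" using yt GY_carrier T_H H_carrier by blast+
    have "inv y \<otimes> k \<in> K"
      using subgroup.m_closed[OF K(1) subgroup.m_inv_closed[OF K(1)] k] yt(2)
        \<open>generate G ?Y \<subseteq> K\<close> by blast
    then have "t \<in> K" using c yt(1) by (simp add: m_assoc[symmetric])
    then have "t = \<one>" using \<tau>(3) yt(3) by blast
    then show "k \<in> generate G ?Y" using yt c by simp
  qed
qed

lemma (in group) finite_index_subgroup_finitely_generated:
  assumes S: "finite S" "S \<subseteq> carrier G" and K: "subgroup K G" "K \<subseteq> generate G S"
    and fin: "finite ((\<lambda>g. K #> g) ` generate G S)"
  shows "\<exists>Y. finite Y \<and> Y \<subseteq> K \<and> generate G Y = K"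
proof -
  obtain \<tau> where \<tau>: "\<And>g. g \<in> generate G S \<Longrightarrow> \<tau> g \<in> generate G S"
    "\<And>g. g \<in> generate G S \<Longrightarrow> K #> \<tau> g = K #> g"
    "\<And>g. g \<in> generate G S \<Longrightarrow> \<tau> g \<in> K \<Longrightarrow> \<tau> g = \<one>" "finite (\<tau> ` generate G S)"
    using right_transversal[OF K(1) generate_is_subgroup[OF S(2)]] fin by metis
  let ?Y = "schreier_generators \<tau> S"
  have "generate G ?Y = K" using generate_schreier_generators[OF S(2) K \<tau>(1-3)] .
  moreover have "finite ?Y" using S(1) \<tau>(4) by (simp add: schreier_generators_def)
  moreover have "?Y \<subseteq> generate G ?Y" by (rule subsetI) (rule generate.incl)
  ultimately show ?thesis by blast
qed

lemma (in group) exists_pow_prime_order: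
  assumes x: "x \<in> carrier G" "x \<noteq> \<one>" and k: "(k::nat) > 0" "x [^] k = \<one>"
  obtains j p where "Factorial_Ring.prime (p::nat)" "x [^] (j::nat) \<noteq> \<one>" "(x [^] j) [^] p = \<one>"
proof -
  define n where "n = ord x"
  have "n dvd k" using k(2) pow_eq_id[OF x(1)] n_def by simp
  then have "n > 0" using k(1) by (auto intro: Nat.gr0I)
  moreover have "n \<noteq> 1" using ord_eq_1[OF x(1)] x(2) n_def by simp
  ultimately obtain p where p: "Factorial_Ring.prime p" "p dvd n" using prime_factor_nat by blast
  define j where "j = n div p"
  have "0 < j" "j < n"
    using p \<open>n > 0\<close> prime_gt_1_nat[OF p(1)] dvd_imp_le[OF p(2)]
    by (auto simp: j_def div_greater_zero_iff)
  then have "x [^] j \<noteq> \<one>" using pow_eq_id[OF x(1)] n_def by (auto dest: dvd_imp_le)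
  moreover have "(x [^] j) [^] p = \<one>"
    using p(2) x(1) n_def by (simp add: j_def nat_pow_pow)
  ultimately show thesis using that p(1) by blast
qed

section \<open>Automorphisms of the tree\<close>

lemma tree_take: "v \<in> tree m \<Longrightarrow> take k v \<in> tree m"
  by (auto simp: tree_def)

lemma is_aut_in_tree: "is_aut m g \<Longrightarrow> v \<in> tree m \<Longrightarrow> g v \<in> tree m"
  unfolding is_aut_def bij_betw_def by auto

lemma is_aut_length: "is_aut m g \<Longrightarrow> v \<in> tree m \<Longrightarrow> length (g v) = length v"
  unfolding is_aut_def by auto

lemma is_aut_take: "is_aut m g \<Longrightarrow> v \<in> tree m \<Longrightarrow> g (take k v) = take k (g v)"
  unfolding is_aut_def by auto

lemma is_aut_outside: "is_aut m g \<Longrightarrow> v \<notin> tree m \<Longrightarrow> g v = v"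
  unfolding is_aut_def by auto

lemma is_aut_inj:
  assumes g: "is_aut m g"
  shows "inj g"
proof (rule injI)
  fix x y assume eq: "g x = g y"
  have "inj_on g (tree m)" using g unfolding is_aut_def bij_betw_def by auto
  then show "x = y"
    using eq is_aut_outside[OF g] is_aut_in_tree[OF g]
    by (cases "x \<in> tree m"; cases "y \<in> tree m") (metis inj_onD)+
qed

lemma is_aut_id: "is_aut m id"
  unfolding is_aut_def by auto

lemma is_aut_comp:
  assumes f: "is_aut m f" and g: "is_aut m g"
  shows "is_aut m (f \<circ> g)"
  unfolding is_aut_def
proof (intro conjI ballI allI impI)
  show "bij_betw (f \<circ> g) (tree m) (tree m)"
    using f g unfolding is_aut_def by (auto intro: bij_betw_trans)
  fix v assume v: "v \<in> tree m"
  show "length ((f \<circ> g) v) = length v"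
    using is_aut_length[OF f is_aut_in_tree[OF g v]] is_aut_length[OF g v] by simp
  fix k show "(f \<circ> g) (take k v) = take k ((f \<circ> g) v)"
    using is_aut_take[OF f is_aut_in_tree[OF g v]] is_aut_take[OF g v] by simp
next
  fix v assume "v \<notin> tree m"
  then show "(f \<circ> g) v = v" using is_aut_outside[OF f] is_aut_outside[OF g] by simp
qed

lemma is_aut_inverse:
  assumes g: "is_aut m g"
  obtains h where "is_aut m h" "h \<circ> g = id" "g \<circ> h = id"
proof
  define h where "h w = (if w \<in> tree m then inv_into (tree m) g w else w)" for w
  have b: "bij_betw g (tree m) (tree m)" using g unfolding is_aut_def by auto
  have bh: "bij_betw h (tree m) (tree m)"
    using bij_betw_inv_into[OF b] by (rule bij_betw_cong[THEN iffD1, rotated]) (simp add: h_def)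
  have hg: "h (g w) = w" for w
    using b is_aut_in_tree[OF g] is_aut_outside[OF g]
    by (cases "w \<in> tree m") (auto simp: h_def bij_betw_def inv_into_f_f)
  have gh: "g (h w) = w" for w
    using b is_aut_outside[OF g] by (cases "w \<in> tree m") (auto simp: h_def bij_betw_def f_inv_into_f)
  show "h \<circ> g = id" "g \<circ> h = id" using hg gh by auto
  have h_tree: "h v \<in> tree m" if "v \<in> tree m" for v
    using bh that unfolding bij_betw_def by auto
  show "is_aut m h"
    unfolding is_aut_def
  proof (intro conjI ballI allI impI bh)
    fix v assume v: "v \<in> tree m"
    show "length (h v) = length v"
      using is_aut_length[OF g h_tree[OF v]] gh[of v] by simp
    fix k
    have "g (take k (h v)) = take k v"
      using is_aut_take[OF g h_tree[OF v], of k] gh[of v] by simp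
    then show "h (take k v) = take k (h v)"
      using hg[of "take k (h v)"] by simp
  qed (simp add: h_def)
qed

lemma AutT_carrier [simp]: "carrier (AutT m) = {g. is_aut m g}"
  and AutT_mult [simp]: "x \<otimes>\<^bsub>AutT m\<^esub> y = x \<circ> y"
  and AutT_one [simp]: "\<one>\<^bsub>AutT m\<^esub> = id"
  by (simp_all add: AutT_def)

lemma group_AutT: "group (AutT m)"
proof (rule groupI)
  fix g assume "g \<in> carrier (AutT m)"
  then obtain h where "is_aut m h" "h \<circ> g = id" by (auto elim: is_aut_inverse)
  then show "\<exists>h\<in>carrier (AutT m). h \<otimes>\<^bsub>AutT m\<^esub> g = \<one>\<^bsub>AutT m\<^esub>" by auto
qed (auto simp: is_aut_comp is_aut_id o_assoc)

lemma is_aut_AutT_inv: "is_aut m g \<Longrightarrow> is_aut m (inv\<^bsub>AutT m\<^esub> g)"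
  using group.inv_closed[OF group_AutT] by simp

lemma AutT_inv_comp_left: "is_aut m g \<Longrightarrow> inv\<^bsub>AutT m\<^esub> g \<circ> g = id"
  using group.l_inv[OF group_AutT] by simp

lemma AutT_inv_comp_right: "is_aut m g \<Longrightarrow> g \<circ> inv\<^bsub>AutT m\<^esub> g = id"
  using group.r_inv[OF group_AutT] by simp

lemma AutT_inv_apply_left: "is_aut m g \<Longrightarrow> (inv\<^bsub>AutT m\<^esub> g) (g w) = w"
  using AutT_inv_comp_left by (metis comp_apply id_apply)

lemma AutT_inv_apply_right: "is_aut m g \<Longrightarrow> g ((inv\<^bsub>AutT m\<^esub> g) w) = w"
  using AutT_inv_comp_right by (metis comp_apply id_apply)

lemma AutT_inv_eqI: "is_aut m g \<Longrightarrow> is_aut m h \<Longrightarrow> h \<circ> g = id \<Longrightarrow> inv\<^bsub>AutT m\<^esub> g = h"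
  by (rule group.inv_equality[OF group_AutT]) simp_all

lemma desc_length_le: "desc v w \<Longrightarrow> length v \<le> length w"
  unfolding desc_def by (metis length_take min.absorb_iff1 min.commute)

lemma desc_in_tree: "desc v w \<Longrightarrow> w \<in> tree m \<Longrightarrow> v \<in> tree m"
  unfolding desc_def by (metis tree_take)

lemma desc_refl [simp]: "desc v v"
  by (simp add: desc_def)

lemma desc_trans: "desc v z \<Longrightarrow> desc z w \<Longrightarrow> desc v w"
  unfolding desc_def by (metis desc_def desc_length_le min.absorb1 take_take)

lemma desc_same_length_eq: "desc v w \<Longrightarrow> length v = length w \<Longrightarrow> v = w"
  unfolding desc_def by simp

lemma not_desc_both: "length v = length v' \<Longrightarrow> v \<noteq> v' \<Longrightarrow> desc v w \<Longrightarrow> \<not> desc v' w"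
  unfolding desc_def by simp

lemma is_aut_desc:
  assumes g: "is_aut m g" and w: "w \<in> tree m" and d: "desc v w"
  shows "desc (g v) (g w)"
proof -
  have "g v = take (length v) (g w)"
    using is_aut_take[OF g w, of "length v"] d by (simp add: desc_def)
  then show ?thesis
    using is_aut_length[OF g desc_in_tree[OF d w]] by (simp add: desc_def)
qed

lemma is_aut_desc_iff:
  assumes g: "is_aut m g" and w: "w \<in> tree m"
  shows "desc (g v) (g w) \<longleftrightarrow> desc v w"
  using is_aut_desc[OF is_aut_AutT_inv[OF g] is_aut_in_tree[OF g w], of "g v"]
    is_aut_desc[OF g w] AutT_inv_apply_left[OF g] by auto

lemma is_aut_moves_vertex:
  assumes g: "is_aut m g" and "g \<noteq> id"
  shows "\<exists>w\<in>tree m. g w \<noteq> w"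
proof (rule ccontr)
  assume "\<not> ?thesis"
  then have "g w = w" for w using is_aut_outside[OF g] by (cases "w \<in> tree m") auto
  then show False using \<open>g \<noteq> id\<close> by auto
qed

lemma AutT_pow_fixes: "b u = u \<Longrightarrow> (b [^]\<^bsub>AutT m\<^esub> (n::nat)) u = u"
  by (induct n) simp_all

text \<open>If \<open>a ^ i\<close> fixed \<open>u\<close> for some \<open>0 < i < p\<close>, then so would \<open>a = (a ^ i) ^ x\<close>, where
  \<open>i x = p y + 1\<close> by Bezout.\<close>

lemma prime_order_free_orbit:
  assumes a: "is_aut m a" "a \<noteq> id" and p: "Factorial_Ring.prime (p::nat)" "a [^]\<^bsub>AutT m\<^esub> p = id"
  obtains u where "u \<in> tree m" "\<And>i. 0 < i \<Longrightarrow> i < p \<Longrightarrow> (a [^]\<^bsub>AutT m\<^esub> i) u \<noteq> u"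
proof -
  interpret AutT: group "AutT m" using group_AutT .
  obtain u where u: "u \<in> tree m" "a u \<noteq> u" using is_aut_moves_vertex[OF a] by blast
  have "(a [^]\<^bsub>AutT m\<^esub> i) u \<noteq> u" if i: "0 < i" "i < p" for i
  proof
    assume fix_u: "(a [^]\<^bsub>AutT m\<^esub> i) u = u"
    have "coprime p i" using prime_imp_coprime[OF p(1)] i nat_dvd_not_less by blast
    then obtain x y where xy: "i * x = Suc (p * y)"
      using bezout_nat[of i p] i(1) by (auto simp: coprime_iff_gcd_eq_1 gcd.commute)
    have "(a [^]\<^bsub>AutT m\<^esub> i) [^]\<^bsub>AutT m\<^esub> x = a [^]\<^bsub>AutT m\<^esub> (p * y) \<circ> a"
      using a(1) by (simp add: AutT.nat_pow_pow xy)
    also have "\<dots> = a"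
      using a(1) p(2) AutT.nat_pow_one by (simp flip: AutT.nat_pow_pow)
    finally have "(a [^]\<^bsub>AutT m\<^esub> i) [^]\<^bsub>AutT m\<^esub> x = a" .
    then show False using AutT_pow_fixes[of "a [^]\<^bsub>AutT m\<^esub> i" u m x] fix_u u(2) by simp
  qed
  then show thesis using that u(1) by blast
qed

lemma card_level_ge:
  assumes "\<And>n. m n \<ge> 2" and "finite (level m n)"
  shows "2 ^ n \<le> card (level m n)"
proof -
  have binary: "{xs. set xs \<subseteq> {0, 1} \<and> length xs = n} \<subseteq> level m n"
  proof -
    have "xs ! i < m i" if "set xs \<subseteq> {0, 1}" "i < length xs" for xs :: "nat list" and i
    proof -
      have "xs ! i \<le> 1" using that nth_mem by fastforce
      then show ?thesis using assms(1)[of i] by linarith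
    qed
    then show ?thesis by (auto simp: level_def tree_def)
  qed
  have "card {xs. set xs \<subseteq> {0::nat, 1} \<and> length xs = n} = 2 ^ n"
    using card_lists_length_eq[of "{0::nat, 1}" n] by (simp add: numeral_2_eq_2)
  then show ?thesis using card_mono[OF assms(2) binary] by simp
qed

definition restrict_below :: "nat list \<Rightarrow> (nat list \<Rightarrow> nat list) \<Rightarrow> nat list \<Rightarrow> nat list" where
  "restrict_below u g = (\<lambda>w. if desc u w then g w else w)"

lemma restrict_below_comp:
  assumes g: "is_aut m g" and h: "is_aut m h" and "h u = u"
  shows "restrict_below u (g \<circ> h) = restrict_below u g \<circ> restrict_below u h"
proof
  fix w
  have "desc u (h w)" if "desc u w"
    using that is_aut_desc[OF h, of w u] is_aut_outside[OF h, of w] \<open>h u = u\<close>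
    by (cases "w \<in> tree m") auto
  then show "restrict_below u (g \<circ> h) w = (restrict_below u g \<circ> restrict_below u h) w"
    by (simp add: restrict_below_def)
qed

section \<open>Rigid stabilisers\<close>

locale aut_subgroup =
  fixes m :: "nat \<Rightarrow> nat" and G :: "(nat list \<Rightarrow> nat list) set"
  assumes subgroup_G: "subgroup G (AutT m)"
begin

lemma mem_is_aut: "g \<in> G \<Longrightarrow> is_aut m g"
  using subgroup.subset[OF subgroup_G] by auto

lemma comp_mem: "f \<in> G \<Longrightarrow> g \<in> G \<Longrightarrow> f \<circ> g \<in> G"
  using subgroup.m_closed[OF subgroup_G] by fastforce

lemma id_mem: "id \<in> G"
  using subgroup.one_closed[OF subgroup_G] by simp

lemma inv_mem: "g \<in> G \<Longrightarrow> inv\<^bsub>AutT m\<^esub> g \<in> G"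
  using subgroup.m_inv_closed[OF subgroup_G] by simp

lemma pow_mem: "g \<in> G \<Longrightarrow> g [^]\<^bsub>AutT m\<^esub> (n::nat) \<in> G"
  by (induct n) (simp_all add: id_mem comp_mem)

lemma subgroup_grp_imp_subgroup_AutT: "subgroup K (grp m G) \<Longrightarrow> subgroup K (AutT m)"
  using group.incl_subgroup[OF group_AutT subgroup_G] by (simp add: grp_def)

lemma subgroup_AutT_imp_subgroup_grp: "subgroup K (AutT m) \<Longrightarrow> K \<subseteq> G \<Longrightarrow> subgroup K (grp m G)"
  unfolding grp_def by (rule group.subgroup_incl[OF group_AutT _ subgroup_G])

lemma subgroup_grp_subset: "subgroup K (grp m G) \<Longrightarrow> K \<subseteq> G"
  using subgroup.subset by (fastforce simp: grp_def AutT_def)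

lemma group_grp: "subgroup K (grp m G) \<Longrightarrow> group (grp m K)"
  using subgroup.subgroup_is_group[OF subgroup_grp_imp_subgroup_AutT group_AutT]
  by (simp add: grp_def)

lemma grp_inv: "subgroup K (grp m G) \<Longrightarrow> x \<in> K \<Longrightarrow> inv\<^bsub>grp m K\<^esub> x = inv\<^bsub>AutT m\<^esub> x"
  unfolding grp_def
  using group.m_inv_consistent[OF group_AutT subgroup_grp_imp_subgroup_AutT] by (simp add: grp_def)

lemma rcosets_grp: "rcosets\<^bsub>grp m G\<^esub> K = (\<lambda>g. (\<lambda>h. h \<circ> g) ` K) ` G"
  by (auto simp: RCOSETS_def r_coset_def grp_def AutT_def)

lemma finite_index_pigeonhole:
  assumes fi: "finite_index m G K" and "id \<in> K" and S: "S \<subseteq> G" "infinite S"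
  shows "\<exists>x\<in>S. \<exists>y\<in>S. x \<noteq> y \<and> x \<circ> inv\<^bsub>AutT m\<^esub> y \<in> K"
proof -
  let ?coset = "\<lambda>g. (\<lambda>h. h \<circ> g) ` K"
  have "finite (?coset ` S)"
    using fi S(1) by (simp add: finite_index_def rcosets_grp) (meson finite_subset image_mono)
  then have "\<not> inj_on ?coset S" using S(2) finite_imageD by blast
  then obtain x y where xy: "x \<in> S" "y \<in> S" "x \<noteq> y" "?coset x = ?coset y"
    unfolding inj_on_def by blast
  have "x \<in> ?coset x" using \<open>id \<in> K\<close> image_eqI[of x "\<lambda>h. h \<circ> x" id] by simp
  then obtain h where "h \<in> K" "x = h \<circ> y" using xy(4) by auto
  moreover have "h \<circ> y \<circ> inv\<^bsub>AutT m\<^esub> y = h"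
    using AutT_inv_comp_right[OF mem_is_aut] S(1) xy(2) by (auto simp: o_assoc[symmetric])
  ultimately show ?thesis using xy by metis
qed

lemma rist_subset: "rist m G v \<subseteq> G"
  by (auto simp: rist_def)

lemma rist_is_aut: "x \<in> rist m G v \<Longrightarrow> is_aut m x"
  using mem_is_aut rist_subset by blast

lemma rist_fixes: "x \<in> rist m G v \<Longrightarrow> w \<in> tree m \<Longrightarrow> \<not> desc v w \<Longrightarrow> x w = w"
  by (simp add: rist_def)

lemma rist_fixes_root:
  assumes x: "x \<in> rist m G v" and v: "v \<in> tree m"
  shows "x v = v"
proof (rule ccontr)
  assume ne: "x v \<noteq> v"
  have a: "is_aut m x" using rist_is_aut[OF x] .
  have "\<not> desc v (x v)" using ne desc_same_length_eq is_aut_length[OF a v] by metis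
  then have "x (x v) = x v" using rist_fixes[OF x is_aut_in_tree[OF a v]] by blast
  then show False using ne is_aut_inj[OF a] by (metis injD)
qed

lemma rist_desc:
  assumes x: "x \<in> rist m G v" and w: "w \<in> tree m" and d: "desc v w"
  shows "desc v (x w)"
  using is_aut_desc[OF rist_is_aut[OF x] w d] rist_fixes_root[OF x desc_in_tree[OF d w]] by simp

lemma rist_antimono: "desc v z \<Longrightarrow> rist m G z \<subseteq> rist m G v"
  unfolding rist_def using desc_trans by blast

lemma rist_moves_desc: "x \<in> rist m G v \<Longrightarrow> x \<noteq> id \<Longrightarrow> \<exists>w\<in>tree m. desc v w \<and> x w \<noteq> w"
  using is_aut_moves_vertex[OF rist_is_aut] rist_fixes by metis

lemma rist_commute:
  assumes x: "x \<in> rist m G v" and y: "y \<in> rist m G v'"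
    and l: "length v = length v'" and ne: "v \<noteq> v'"
  shows "x \<circ> y = y \<circ> x"
proof
  fix w
  have ax: "is_aut m x" and ay: "is_aut m y" using rist_is_aut x y by blast+
  show "(x \<circ> y) w = (y \<circ> x) w"
  proof (cases "w \<in> tree m")
    case False
    then show ?thesis using is_aut_outside[OF ax] is_aut_outside[OF ay] by simp
  next
    case w: True
    consider "desc v w" | "desc v' w" | "\<not> desc v w" "\<not> desc v' w" by blast
    then show ?thesis
    proof cases
      case 1
      then show ?thesis
        using rist_fixes[OF y] w rist_desc[OF x w] is_aut_in_tree[OF ax w] not_desc_both[OF l ne]
        by simp
    next
      case 2
      then show ?thesis
        using rist_fixes[OF x] w rist_desc[OF y w] is_aut_in_tree[OF ay w] not_desc_both[OF l[symmetric] ne[symmetric]]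
        by simp
    next
      case 3
      then show ?thesis using rist_fixes[OF x] rist_fixes[OF y] w by simp
    qed
  qed
qed

lemma rist_id: "id \<in> rist m G v"
  using id_mem by (simp add: rist_def)

lemma rist_comp: "x \<in> rist m G v \<Longrightarrow> y \<in> rist m G v \<Longrightarrow> x \<circ> y \<in> rist m G v"
  using comp_mem by (simp add: rist_def)

lemma rist_inv:
  assumes x: "x \<in> rist m G v"
  shows "inv\<^bsub>AutT m\<^esub> x \<in> rist m G v"
proof -
  have "(inv\<^bsub>AutT m\<^esub> x) w = w" if "w \<in> tree m" "\<not> desc v w" for w
    using rist_fixes[OF x that] AutT_inv_apply_left[OF rist_is_aut[OF x], of w] by simp
  then show ?thesis using inv_mem rist_subset x by (auto simp: rist_def)
qed

lemma rist_conj: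
  assumes g: "g \<in> G" and x: "x \<in> rist m G v"
  shows "g \<circ> x \<circ> inv\<^bsub>AutT m\<^esub> g \<in> rist m G (g v)"
proof -
  have ag: "is_aut m g" using mem_is_aut[OF g] .
  have "(g \<circ> x \<circ> inv\<^bsub>AutT m\<^esub> g) w = w" if w: "w \<in> tree m" and nd: "\<not> desc (g v) w" for w
  proof -
    let ?w = "(inv\<^bsub>AutT m\<^esub> g) w"
    have w': "?w \<in> tree m" using is_aut_in_tree[OF is_aut_AutT_inv[OF ag] w] .
    have "\<not> desc v ?w" using nd is_aut_desc_iff[OF ag w', of v] AutT_inv_apply_right[OF ag] by simp
    then show ?thesis using rist_fixes[OF x w'] AutT_inv_apply_right[OF ag] by simp
  qed
  moreover have "g \<circ> x \<circ> inv\<^bsub>AutT m\<^esub> g \<in> G"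
    using comp_mem inv_mem g rist_subset x by blast
  ultimately show ?thesis by (simp add: rist_def)
qed

lemma normal_grp_closed:
  assumes K: "subgroup K (grp m G)" and N: "N \<lhd> grp m K"
  shows "N \<subseteq> K"
    and "x \<in> N \<Longrightarrow> y \<in> N \<Longrightarrow> x \<circ> y \<in> N"
    and "x \<in> N \<Longrightarrow> inv\<^bsub>AutT m\<^esub> x \<in> N"
    and "k \<in> K \<Longrightarrow> x \<in> N \<Longrightarrow> k \<circ> x \<circ> inv\<^bsub>AutT m\<^esub> k \<in> N"
    and "id \<in> N"
proof -
  interpret N: normal N "grp m K" using N .
  show "id \<in> N" using subgroup.one_closed[OF normal_imp_subgroup[OF N]] by (simp add: grp_def AutT_def)
  show "N \<subseteq> K" using N.subset by (simp add: grp_def AutT_def)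
  then show "x \<in> N \<Longrightarrow> inv\<^bsub>AutT m\<^esub> x \<in> N"
    by (metis subgroup.m_inv_closed[OF normal_imp_subgroup[OF N]] grp_inv[OF K] subsetD)
  show "x \<in> N \<Longrightarrow> y \<in> N \<Longrightarrow> x \<circ> y \<in> N"
    using subgroup.m_closed[OF normal_imp_subgroup[OF N]] by (simp add: grp_def AutT_def)
  show "k \<in> K \<Longrightarrow> x \<in> N \<Longrightarrow> k \<circ> x \<circ> inv\<^bsub>AutT m\<^esub> k \<in> N"
    using N.inv_op_closed2 grp_inv[OF K] by (simp add: grp_def AutT_def)
qed

text \<open>If \<open>x\<close> moves \<open>w\<close>, then \<open>x \<circ> y \<circ> inv x\<close> lives below \<open>x w \<noteq> w\<close> and cannot equal \<open>y\<close>.\<close>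

lemma rist_commutator_nontrivial:
  assumes x: "x \<in> rist m G v" and y: "y \<in> rist m G w"
    and w: "w \<in> tree m" "desc v w" "x w \<noteq> w" and "y \<noteq> id"
  shows "inv\<^bsub>AutT m\<^esub> x \<circ> y \<circ> x \<circ> inv\<^bsub>AutT m\<^esub> y \<noteq> id"
proof
  assume comm: "inv\<^bsub>AutT m\<^esub> x \<circ> y \<circ> x \<circ> inv\<^bsub>AutT m\<^esub> y = id"
  have ax: "is_aut m x" and ay: "is_aut m y" using rist_is_aut x y by blast+
  obtain w' where w': "w' \<in> tree m" "desc w w'" "y w' \<noteq> w'"
    using rist_moves_desc[OF y \<open>y \<noteq> id\<close>] by blast
  have "y (x s) = x (y s)" for s
  proof -
    have "(inv\<^bsub>AutT m\<^esub> x) (y (x ((inv\<^bsub>AutT m\<^esub> y) (y s)))) = y s"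
      using fun_cong[OF comm, of "y s"] by simp
    then have "x ((inv\<^bsub>AutT m\<^esub> x) (y (x s))) = x (y s)"
      using AutT_inv_apply_left[OF ay] by simp
    then show ?thesis using AutT_inv_apply_right[OF ax] by simp
  qed
  then have "(x \<circ> y \<circ> inv\<^bsub>AutT m\<^esub> x) w' = y w'"
    using AutT_inv_apply_right[OF ax] by (simp flip: \<open>\<And>s. y (x s) = x (y s)\<close>)
  moreover have "x \<circ> y \<circ> inv\<^bsub>AutT m\<^esub> x \<in> rist m G (x w)"
    using rist_conj[OF _ y] rist_subset x by blast
  moreover have "\<not> desc (x w) w'"
    using not_desc_both[OF is_aut_length[OF ax w(1), symmetric] w(3)[symmetric] w'(2)] .
  ultimately show False using rist_fixes[OF _ w'(1)] w'(3) by (metis comp_apply)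
qed

lemma restrict_below_rist_same: "x \<in> rist m G u \<Longrightarrow> restrict_below u x = x"
  using rist_fixes is_aut_outside[OF rist_is_aut]
  by (fastforce simp: restrict_below_def fun_eq_iff)

lemma restrict_below_rist_other:
  assumes "x \<in> rist m G v" "length v = length u" "v \<noteq> u"
  shows "restrict_below u x = id"
  using rist_fixes[OF assms(1)] is_aut_outside[OF rist_is_aut[OF assms(1)]] not_desc_both[OF assms(2,3)]
  by (fastforce simp: restrict_below_def fun_eq_iff)

lemma rist_fixes_level:
  assumes "x \<in> rist m G v" "v \<in> level m n" "v' \<in> level m n"
  shows "x v' = v'"
proof (cases "v' = v")
  case True
  then show ?thesis using assms rist_fixes_root by (simp add: level_def)
next
  case False
  then have "\<not> desc v v'" using assms(2,3) desc_same_length_eq by (force simp: level_def)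
  then show ?thesis using assms(3) rist_fixes[OF assms(1)] by (simp add: level_def)
qed

lemma Rist_subset: "Rist m G n \<subseteq> G"
  unfolding Rist_def
  by (rule group.generate_subgroup_incl[OF group_AutT _ subgroup_G]) (auto simp: rist_def)

lemma Rist_restrict_below:
  assumes u: "u \<in> level m n" and g: "g \<in> Rist m G n"
  shows "(\<forall>v\<in>level m n. g v = v) \<and> restrict_below u g \<in> rist m G u"
  using g[unfolded Rist_def]
proof (induct g rule: generate.induct)
  case one
  then show ?case using rist_id[of u] by (simp add: restrict_below_def id_def)
next
  case (incl h)
  then obtain v where v: "v \<in> level m n" "h \<in> rist m G v" by blast
  then have "restrict_below u h \<in> rist m G u"
    using restrict_below_rist_same restrict_below_rist_other[OF v(2)] rist_id u
    by (cases "v = u") (auto simp: level_def)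
  then show ?case using rist_fixes_level[OF v(2,1)] by simp
next
  case (inv h)
  then obtain v where v: "v \<in> level m n" "h \<in> rist m G v" by blast
  then have "restrict_below u (inv\<^bsub>AutT m\<^esub> h) \<in> rist m G u"
    using restrict_below_rist_same restrict_below_rist_other[OF rist_inv[OF v(2)]] rist_inv rist_id u
    by (cases "v = u") (auto simp: level_def)
  then show ?case using rist_fixes_level[OF rist_inv[OF v(2)] v(1)] by simp
next
  case (eng h1 h2)
  have "is_aut m h1" "is_aut m h2"
    using eng(1,3) Rist_subset mem_is_aut unfolding Rist_def by blast+
  then have "restrict_below u (h1 \<circ> h2) = restrict_below u h1 \<circ> restrict_below u h2"
    using restrict_below_comp eng(4) u by blast
  then show ?case using eng(2,4) rist_comp by (simp only: AutT_mult) auto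
qed

end

section \<open>Branch groups\<close>

locale branch_group = aut_subgroup +
  assumes branching: "\<And>n. m n \<ge> 2"
    and branch: "branch m G"
begin

lemma level_transitive: "level_transitive m G"
  using branch by (simp add: branch_def)

lemma infinite_G: "infinite G"
proof
  assume fin: "finite G"
  define N where "N = card G"
  define v where "v = replicate N (0::nat)"
  have "0 < m i" for i using branching[of i] by linarith
  then have "v \<in> level m N" by (simp add: v_def level_def tree_def)
  have orbit: "level m N \<subseteq> (\<lambda>g. g v) ` G"
  proof
    fix w assume "w \<in> level m N"
    then obtain g where "g \<in> G" "g v = w"
      using level_transitive \<open>v \<in> level m N\<close> unfolding level_transitive_def by blast
    then show "w \<in> (\<lambda>g. g v) ` G" by blast
  qed
  then have "finite (level m N)" using fin finite_subset by blast
  then have "2 ^ N \<le> card (level m N)" by (rule card_level_ge[where m = m, OF branching])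
  also have "\<dots> \<le> N"
    using card_mono[OF _ orbit] card_image_le[OF fin] fin N_def by (meson finite_imageI le_trans)
  finally show False using less_exp[of N] by simp
qed

text \<open>Level-transitivity makes all rigid stabilisers of a level conjugate, so if one of them
  were trivial, \<open>Rist m G n\<close> would be a trivial subgroup of finite index in the infinite group G.\<close>

lemma rist_nontrivial:
  assumes v: "v \<in> tree m"
  shows "\<exists>x\<in>rist m G v. x \<noteq> id"
proof (rule ccontr)
  assume "\<not> ?thesis"
  then have triv: "rist m G v \<subseteq> {id}" by auto
  define n where "n = length v"
  have v_level: "v \<in> level m n" using v by (simp add: level_def n_def)
  have "rist m G v' \<subseteq> {id}" if v': "v' \<in> level m n" for v'
  proof
    fix x assume x: "x \<in> rist m G v'"
    obtain g where g: "g \<in> G" "g v = v'"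
      using level_transitive v_level v' unfolding level_transitive_def by blast
    have ag: "is_aut m g" using mem_is_aut[OF g(1)] .
    have "inv\<^bsub>AutT m\<^esub> g \<circ> x \<circ> inv\<^bsub>AutT m\<^esub> (inv\<^bsub>AutT m\<^esub> g) \<in> rist m G v"
      using rist_conj[OF inv_mem[OF g(1)] x] by (simp add: g(2)[symmetric] AutT_inv_apply_left[OF ag])
    then have "inv\<^bsub>AutT m\<^esub> g \<circ> x \<circ> g = id"
      using triv group.inv_inv[OF group_AutT] ag by auto
    moreover have "x = g \<circ> (inv\<^bsub>AutT m\<^esub> g \<circ> x \<circ> g) \<circ> inv\<^bsub>AutT m\<^esub> g"
      by (simp add: fun_eq_iff AutT_inv_apply_right[OF ag])
    ultimately show "x \<in> {id}"
      using AutT_inv_comp_right[OF ag] by simp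
  qed
  then have "Rist m G n \<subseteq> {id}"
    unfolding Rist_def using group.generate_subgroup_incl[OF group_AutT _ group.triv_subgroup[OF group_AutT]]
    by (metis (no_types, lifting) AutT_one UN_least)
  then have "Rist m G n = {id}"
    unfolding Rist_def using generate.one[of "AutT m"] by auto
  moreover have "finite ((\<lambda>g. (\<lambda>h. h \<circ> g) ` Rist m G n) ` G)"
    using branch by (simp add: branch_def finite_index_def rcosets_grp)
  ultimately have "finite ((\<lambda>g. {g}) ` G)" by simp
  then have "finite G" by (rule finite_imageD) (simp add: inj_on_def)
  then show False using infinite_G by simp
qed

lemma infinite_rist:
  assumes v: "v \<in> tree m"
  shows "infinite (rist m G v)"
proof -
  define z where "z d = v @ replicate d 1 @ [0::nat]" for d
  have z_tree: "z d \<in> tree m" for d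
  proof -
    have "z d ! i < m i" if "i < length (z d)" for i
    proof (cases "i < length v")
      case True
      then show ?thesis using v by (simp add: z_def nth_append tree_def)
    next
      case False
      then have "z d ! i \<le> 1" using that by (simp add: z_def nth_append nth_Cons' split: if_splits)
      then show ?thesis using branching[of i] by linarith
    qed
    then show ?thesis by (simp add: tree_def)
  qed
  have z_incomparable: "\<not> (desc (z d) w \<and> desc (z d') w)" if "d < d'" for d d' w
  proof
    assume "desc (z d) w \<and> desc (z d') w"
    then have "take (length (z d)) w = z d" "take (length (z d')) w = z d'"
      unfolding desc_def by auto
    moreover have "length v + d < length (z d)" "length v + d < length (z d')"
      using that by (simp_all add: z_def)
    ultimately have "z d ! (length v + d) = z d' ! (length v + d)" by (metis nth_take)
    then show False using that by (simp add: z_def nth_append)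
  qed
  have "\<exists>e w. e \<in> rist m G (z d) \<and> w \<in> tree m \<and> desc (z d) w \<and> e w \<noteq> w" for d
    using rist_nontrivial[OF z_tree] rist_moves_desc by meson
  then obtain e w where ew: "\<And>d. e d \<in> rist m G (z d)" "\<And>d. w d \<in> tree m"
    "\<And>d. desc (z d) (w d)" "\<And>d. e d (w d) \<noteq> w d"
    by metis
  have moves_only_own: "e d (w d') = w d'" if "d \<noteq> d'" for d d'
    using rist_fixes[OF ew(1) ew(2)] z_incomparable ew(3) that by (metis linorder_neqE_nat)
  have "inj e"
    by (rule injI) (metis ew(4) moves_only_own)
  moreover have "range e \<subseteq> rist m G v"
    using ew(1) rist_antimono[of v "z _"] by (auto simp: desc_def z_def)
  ultimately show ?thesis using range_inj_infinite finite_subset by blast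
qed

lemma finite_index_meets_rist:
  assumes K: "subgroup K (grp m G)" "finite_index m G K" and v: "v \<in> tree m"
  shows "\<exists>x\<in>K \<inter> rist m G v. x \<noteq> id"
proof -
  have "id \<in> K" using subgroup.one_closed[OF K(1)] by (simp add: grp_def)
  then obtain x y where xy: "x \<in> rist m G v" "y \<in> rist m G v" "x \<noteq> y" "x \<circ> inv\<^bsub>AutT m\<^esub> y \<in> K"
    using finite_index_pigeonhole[OF K(2) _ rist_subset infinite_rist[OF v]] by blast
  have "x \<circ> inv\<^bsub>AutT m\<^esub> y \<noteq> id"
  proof
    assume "x \<circ> inv\<^bsub>AutT m\<^esub> y = id"
    then have "x \<circ> inv\<^bsub>AutT m\<^esub> y \<circ> y = y" by simp
    then show False
      using xy(3) AutT_inv_comp_left[OF rist_is_aut[OF xy(2)]] by (simp add: o_assoc[symmetric])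
  qed
  then show ?thesis using xy rist_comp rist_inv by blast
qed

text \<open>The conjugate \<open>z\<close> of \<open>inv x\<close> by \<open>n\<close> lives below \<open>n v \<noteq> v\<close>, so it commutes with \<open>y\<close>;
  hence the commutator of \<open>inv x\<close> and \<open>y\<close> equals that of \<open>z \<circ> x \<in> N\<close> and \<open>y\<close>.\<close>

lemma normal_contains_rist_commutator:
  assumes K: "subgroup K (grp m G)" and N: "N \<lhd> grp m K"
    and n: "n \<in> N" "v \<in> tree m" "n v \<noteq> v"
    and x: "x \<in> K" "x \<in> rist m G v" and y: "y \<in> K" "y \<in> rist m G v"
  shows "inv\<^bsub>AutT m\<^esub> x \<circ> y \<circ> x \<circ> inv\<^bsub>AutT m\<^esub> y \<in> N"
proof -
  note N_closed = normal_grp_closed[OF K N]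
  have n_aut: "is_aut m n" using N_closed(1) n(1) subgroup_grp_subset[OF K] mem_is_aut by blast
  have ax: "is_aut m x" using rist_is_aut x(2) by blast
  define ix where "ix = inv\<^bsub>AutT m\<^esub> x"
  define t where "t = ix \<circ> y \<circ> x \<circ> inv\<^bsub>AutT m\<^esub> y"
  define z where "z = n \<circ> ix \<circ> inv\<^bsub>AutT m\<^esub> n"
  define c where "c = z \<circ> x"
  have z_rist: "z \<in> rist m G (n v)"
    unfolding z_def ix_def
    using rist_conj[OF _ rist_inv[OF x(2)]] N_closed(1) n(1) subgroup_grp_subset[OF K] by blast
  have zy: "z \<circ> y = y \<circ> z"
    using rist_commute[OF z_rist y(2)] is_aut_length[OF n_aut n(2)] n(3) by simp
  have c_N: "c \<in> N"
  proof -
    have ix_K: "ix \<in> K"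
      using subgroup.m_inv_closed[OF subgroup_grp_imp_subgroup_AutT[OF K] x(1)] ix_def by simp
    have "ix \<circ> inv\<^bsub>AutT m\<^esub> n \<circ> inv\<^bsub>AutT m\<^esub> ix \<in> N"
      using N_closed(4)[OF ix_K N_closed(3)[OF n(1)]] .
    moreover have "inv\<^bsub>AutT m\<^esub> ix = x" using group.inv_inv[OF group_AutT] ax ix_def by simp
    ultimately have "n \<circ> (ix \<circ> inv\<^bsub>AutT m\<^esub> n \<circ> x) \<in> N" using N_closed(2)[OF n(1)] by simp
    then show ?thesis by (simp add: c_def z_def o_assoc)
  qed
  have c_aut: "is_aut m c" using N_closed(1) c_N subgroup_grp_subset[OF K] mem_is_aut by blast
  have "c (t w) = y (c ((inv\<^bsub>AutT m\<^esub> y) w))" for w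
    using zy AutT_inv_apply_right[OF ax] unfolding t_def c_def ix_def by (simp add: fun_eq_iff)
  then have "t = inv\<^bsub>AutT m\<^esub> c \<circ> (y \<circ> c \<circ> inv\<^bsub>AutT m\<^esub> y)"
    using AutT_inv_apply_left[OF c_aut, of "t _"] by (simp add: fun_eq_iff)
  then show ?thesis
    using N_closed(2)[OF N_closed(3)[OF c_N] N_closed(4)[OF y(1) c_N]] ix_def t_def by simp
qed

lemma normal_meets_rist:
  assumes K: "subgroup K (grp m G)" "finite_index m G K" and N: "N \<lhd> grp m K"
    and n: "n \<in> N" "v \<in> tree m" "n v \<noteq> v"
  shows "\<exists>t\<in>N \<inter> rist m G v. t \<noteq> id"
proof -
  obtain x where x: "x \<in> K" "x \<in> rist m G v" "x \<noteq> id"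
    using finite_index_meets_rist[OF K n(2)] by blast
  obtain w where w: "w \<in> tree m" "desc v w" "x w \<noteq> w"
    using rist_moves_desc[OF x(2,3)] by blast
  obtain y where y: "y \<in> K" "y \<in> rist m G w" "y \<noteq> id"
    using finite_index_meets_rist[OF K w(1)] by blast
  have y_v: "y \<in> rist m G v" using rist_antimono[OF w(2)] y(2) by blast
  define t where "t = inv\<^bsub>AutT m\<^esub> x \<circ> y \<circ> x \<circ> inv\<^bsub>AutT m\<^esub> y"
  have "t \<in> N" using normal_contains_rist_commutator[OF K(1) N n x(1,2) y(1) y_v] t_def by simp
  moreover have "t \<in> rist m G v" using rist_comp rist_inv x(2) y_v t_def by simp
  moreover have "t \<noteq> id" using rist_commutator_nontrivial[OF x(2) y(2) w y(3)] t_def by simp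
  ultimately show ?thesis by blast
qed

end

locale fg_branch_group = branch_group +
  assumes fin_gen_G: "fin_gen m G"
begin

lemma Rist_fin_gen: "fin_gen m (Rist m G n)"
proof -
  obtain S where S: "finite S" "S \<subseteq> G" "generate (AutT m) S = G"
    using fin_gen_G by (auto simp: fin_gen_def)
  have "subgroup (Rist m G n) (AutT m)"
    unfolding Rist_def by (rule group.generate_is_subgroup[OF group_AutT]) (auto simp: rist_def mem_is_aut)
  moreover have "(\<lambda>g. Rist m G n #>\<^bsub>AutT m\<^esub> g) ` G = rcosets\<^bsub>grp m G\<^esub> (Rist m G n)"
    by (auto simp: RCOSETS_def r_coset_def grp_def AutT_def)
  then have "finite ((\<lambda>g. Rist m G n #>\<^bsub>AutT m\<^esub> g) ` generate (AutT m) S)"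
    using branch S(3) by (simp add: branch_def finite_index_def)
  ultimately show ?thesis
    using group.finite_index_subgroup_finitely_generated[OF group_AutT S(1)] S(2,3) Rist_subset mem_is_aut
    by (fastforce simp: fin_gen_def)
qed

text \<open>Restriction below \<open>u\<close> is a homomorphism from \<open>Rist m G n\<close> onto \<open>rist m G u\<close>.\<close>

lemma rist_fin_gen:
  assumes u: "u \<in> tree m"
  shows "fin_gen m (rist m G u)"
proof -
  define n where "n = length u"
  define R where "R = Rist m G n"
  have u_level: "u \<in> level m n" using u by (simp add: level_def n_def)
  obtain Y where Y: "finite Y" "Y \<subseteq> R" "generate (AutT m) Y = R"
    using Rist_fin_gen unfolding fin_gen_def R_def by blast
  have R_sub: "subgroup R (AutT m)"
    unfolding R_def Rist_def by (rule group.generate_is_subgroup[OF group_AutT]) (auto simp: rist_def mem_is_aut)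
  have restr: "restrict_below u g \<in> rist m G u" "g u = u" if "g \<in> R" for g
    using Rist_restrict_below[OF u_level] that u_level unfolding R_def by blast+
  have "restrict_below u \<in> hom ((AutT m)\<lparr>carrier := R\<rparr>) (AutT m)"
  proof (rule homI)
    fix x y assume "x \<in> carrier ((AutT m)\<lparr>carrier := R\<rparr>)" "y \<in> carrier ((AutT m)\<lparr>carrier := R\<rparr>)"
    then have "x \<in> R" "y \<in> R" by simp_all
    then show "restrict_below u (x \<otimes>\<^bsub>(AutT m)\<lparr>carrier := R\<rparr>\<^esub> y)
        = restrict_below u x \<otimes>\<^bsub>AutT m\<^esub> restrict_below u y"
      using restrict_below_comp[of m x y u] restr(2) subgroup.subset[OF R_sub] by auto
  qed (use restr(1) rist_is_aut in auto)
  then interpret restr: group_hom "(AutT m)\<lparr>carrier := R\<rparr>" "AutT m" "restrict_below u"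
    using subgroup.subgroup_is_group[OF R_sub group_AutT] group_AutT
    by (simp add: group_hom_def group_hom_axioms_def)
  have "generate (AutT m) (restrict_below u ` Y) = restrict_below u ` R"
    using restr.generate_img Y group.generate_consistent[OF group_AutT Y(2) R_sub] by simp
  also have "\<dots> = rist m G u"
    using restr(1) restrict_below_rist_same Rist_def R_def u_level
    by (auto intro!: image_eqI generate.incl)
  finally show ?thesis
    using Y(1) restr(1) Y(2) unfolding fin_gen_def by (auto intro!: exI[of _ "restrict_below u ` Y"])
qed

end

section \<open>The diagonal subgroup\<close>

primrec compose_upto :: "(nat \<Rightarrow> 'a \<Rightarrow> 'a) \<Rightarrow> nat \<Rightarrow> 'a \<Rightarrow> 'a" where
  "compose_upto f 0 = id"
| "compose_upto f (Suc n) = f n \<circ> compose_upto f n"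

locale torsion_vertex = fg_branch_group +
  fixes a :: "nat list \<Rightarrow> nat list" and p :: nat and u :: "nat list"
  assumes a_mem: "a \<in> G" and p_gt_1: "1 < p" and a_pow_p: "a [^]\<^bsub>AutT m\<^esub> p = id"
    and u_tree: "u \<in> tree m"
    and orbit_free: "\<And>i. 0 < i \<Longrightarrow> i < p \<Longrightarrow> (a [^]\<^bsub>AutT m\<^esub> i) u \<noteq> u"
begin

definition apow :: "nat \<Rightarrow> nat list \<Rightarrow> nat list" where
  "apow i = a [^]\<^bsub>AutT m\<^esub> i"

lemma apow_mem: "apow i \<in> G"
  unfolding apow_def using pow_mem a_mem by blast

lemma apow_is_aut: "is_aut m (apow i)"
  using mem_is_aut apow_mem by blast

lemma apow_add: "apow (i + j) = apow i \<circ> apow j"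
  unfolding apow_def using monoid.nat_pow_mult[OF group.is_monoid[OF group_AutT], of a m i j] a_mem mem_is_aut
  by simp

lemma apow_0 [simp]: "apow 0 = id"
  by (simp add: apow_def)

lemma apow_1: "apow 1 = a"
  by (simp add: apow_def)

lemma apow_p: "apow p = id"
  using a_pow_p by (simp add: apow_def)

lemma apow_mod: "apow (i mod p) = apow i"
proof -
  have "apow (p * k) = id" for k
    by (induct k) (simp_all add: apow_add apow_p)
  then show ?thesis using apow_add[of "p * (i div p)" "i mod p"] by simp
qed

lemma apow_inverse: "i \<le> p \<Longrightarrow> apow (p - i) \<circ> apow i = id" "i \<le> p \<Longrightarrow> apow i \<circ> apow (p - i) = id"
  using apow_add[of "p - i" i] apow_add[of i "p - i"] apow_p by simp_all

lemma apow_inverse_apply: "i \<le> p \<Longrightarrow> apow (p - i) (apow i w) = w" "i \<le> p \<Longrightarrow> apow i (apow (p - i) w) = w"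
  using apow_inverse by (metis comp_apply id_apply)+

lemma AutT_inv_apow: "i \<le> p \<Longrightarrow> inv\<^bsub>AutT m\<^esub> (apow i) = apow (p - i)"
  by (simp add: AutT_inv_eqI apow_is_aut apow_inverse)

lemma apow_fixes_u_imp_id: "apow j u = u \<Longrightarrow> apow j = id"
  using orbit_free[of "j mod p"] p_gt_1 apow_mod[of j] unfolding apow_def
  by (metis apow_0 apow_def bot_nat_0.not_eq_extremum mod_less_divisor order.strict_trans)

lemma apow_u_inj:
  assumes "i < p" "i' < p" "apow i u = apow i' u"
  shows "i = i'"
proof (rule ccontr)
  have no_return: False if "x < y" "y < p" "apow x u = apow y u" for x y
  proof -
    have "apow x (apow (y - x) u) = apow x u" using that apow_add[of x "y - x"] by simp
    then have "apow (y - x) u = u" using is_aut_inj[OF apow_is_aut] by (metis injD)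
    then show False using orbit_free[of "y - x"] that unfolding apow_def by simp
  qed
  assume "i \<noteq> i'"
  then show False using no_return assms by (metis linorder_neqE_nat)
qed

lemma apow_u_length: "length (apow i u) = length u"
  using is_aut_length[OF apow_is_aut u_tree] .

lemma apow_desc: "w \<in> tree m \<Longrightarrow> desc u w \<Longrightarrow> desc (apow i u) (apow i w) \<and> apow i w \<in> tree m"
  using is_aut_desc[OF apow_is_aut] is_aut_in_tree[OF apow_is_aut] by blast

lemma desc_orbit_vertex:
  assumes w: "w \<in> tree m" and d: "desc (apow i u) w" and i: "i \<le> p"
  shows "w = apow i (apow (p - i) w) \<and> desc u (apow (p - i) w) \<and> apow (p - i) w \<in> tree m"
  using is_aut_desc[OF apow_is_aut w d, of "p - i"] is_aut_in_tree[OF apow_is_aut w]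
    apow_inverse_apply[OF i] by simp

text \<open>The factors \<open>conj_apow q l\<close> of \<open>diag q\<close> live below the pairwise distinct vertices \<open>apow l u\<close>.\<close>

definition conj_apow :: "(nat list \<Rightarrow> nat list) \<Rightarrow> nat \<Rightarrow> nat list \<Rightarrow> nat list" where
  "conj_apow q l = apow l \<circ> q \<circ> apow (p - l)"

definition diag :: "(nat list \<Rightarrow> nat list) \<Rightarrow> nat list \<Rightarrow> nat list" where
  "diag q = compose_upto (conj_apow q) p"

lemma conj_apow_rist:
  assumes "q \<in> rist m G u" "l \<le> p"
  shows "conj_apow q l \<in> rist m G (apow l u)"
  using rist_conj[OF apow_mem assms(1), of l] AutT_inv_apow[OF assms(2)] by (simp add: conj_apow_def)

lemma diag_mem: "q \<in> rist m G u \<Longrightarrow> diag q \<in> G"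
proof -
  assume q: "q \<in> rist m G u"
  have "n \<le> p \<Longrightarrow> compose_upto (conj_apow q) n \<in> G" for n
    by (induct n) (auto simp: id_mem intro!: comp_mem rist_subset[THEN subsetD, OF conj_apow_rist[OF q]])
  then show ?thesis by (simp add: diag_def)
qed

lemma diag_apply:
  assumes q: "q \<in> rist m G u" and i: "i < p" and w: "w \<in> tree m" "desc u w"
  shows "diag q (apow i w) = apow i (q w)"
proof -
  have "compose_upto (conj_apow q) n (apow i w) = (if i < n then apow i (q w) else apow i w)"
    if "n \<le> p" for n
    using that
  proof (induct n)
    case (Suc n)
    have fixes_other: "conj_apow q n z = z" if z: "z \<in> tree m" "desc (apow i u) z" and "i \<noteq> n" for z
    proof -
      have "apow n u \<noteq> apow i u" using apow_u_inj[of n i] Suc(2) i \<open>i \<noteq> n\<close> by auto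
      then have "\<not> desc (apow n u) z" using not_desc_both[OF _ _ z(2)] apow_u_length by metis
      then show ?thesis using rist_fixes[OF conj_apow_rist[OF q] z(1)] Suc(2) by simp
    qed
    have qw: "q w \<in> tree m" "desc u (q w)"
      using rist_desc[OF q w] is_aut_in_tree[OF rist_is_aut[OF q] w(1)] by auto
    consider "i < n" | "i = n" | "n < i" by linarith
    then show ?case
    proof cases
      case 1
      then show ?thesis using Suc fixes_other apow_desc[OF qw] by simp
    next
      case 2
      then show ?thesis using Suc apow_inverse_apply by (simp add: conj_apow_def)
    next
      case 3
      then show ?thesis using Suc fixes_other apow_desc[OF w] by simp
    qed
  qed simp
  then show ?thesis using i by (simp add: diag_def)
qed

lemma diag_outside:
  assumes q: "q \<in> rist m G u" and w: "w \<in> tree m" "\<forall>i<p. \<not> desc (apow i u) w"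
  shows "diag q w = w"
proof -
  have "n \<le> p \<Longrightarrow> compose_upto (conj_apow q) n w = w" for n
    by (induct n) (simp_all add: rist_fixes[OF conj_apow_rist[OF q] w(1)] w(2))
  then show ?thesis by (simp add: diag_def)
qed

lemma diag_comp:
  assumes q: "q \<in> rist m G u" and q': "q' \<in> rist m G u"
  shows "diag (q' \<circ> q) = diag q' \<circ> diag q"
proof
  fix w
  have qq': "q' \<circ> q \<in> rist m G u" using rist_comp q q' by blast
  show "diag (q' \<circ> q) w = (diag q' \<circ> diag q) w"
  proof (cases "w \<in> tree m")
    case False
    then show ?thesis using is_aut_outside[OF mem_is_aut[OF diag_mem]] q q' qq' by simp
  next
    case w: True
    show ?thesis
    proof (cases "\<exists>i<p. desc (apow i u) w")
      case True
      then obtain i where i: "i < p" "desc (apow i u) w" by blast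
      define w' where "w' = apow (p - i) w"
      have w': "w = apow i w'" "desc u w'" "w' \<in> tree m"
        using desc_orbit_vertex[OF w i(2)] i(1) w'_def by auto
      have "q w' \<in> tree m" "desc u (q w')"
        using rist_desc[OF q w'(3,2)] is_aut_in_tree[OF rist_is_aut[OF q] w'(3)] by auto
      then show ?thesis
        using diag_apply[OF qq' i(1) w'(3,2)] diag_apply[OF q i(1) w'(3,2)] diag_apply[OF q' i(1)] w'(1)
        by simp
    next
      case False
      then show ?thesis using diag_outside[OF _ w] q q' qq' by simp
    qed
  qed
qed

lemma diag_id: "diag id = id"
proof -
  have "conj_apow id l = id" if "l < p" for l
    using apow_inverse(2)[of l] that by (simp add: conj_apow_def)
  then have "n \<le> p \<Longrightarrow> compose_upto (conj_apow id) n = id" for n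
    by (induct n) simp_all
  then show ?thesis by (simp add: diag_def)
qed

lemma diag_inv:
  assumes q: "q \<in> rist m G u"
  shows "diag (inv\<^bsub>AutT m\<^esub> q) = inv\<^bsub>AutT m\<^esub> (diag q)"
proof -
  have "diag (inv\<^bsub>AutT m\<^esub> q) \<circ> diag q = id"
    using diag_comp[OF q rist_inv[OF q]] AutT_inv_comp_left[OF rist_is_aut[OF q]] diag_id by simp
  then show ?thesis
    using AutT_inv_eqI mem_is_aut diag_mem q rist_inv by metis
qed

definition rist_gens :: "(nat list \<Rightarrow> nat list) set" where
  "rist_gens = (SOME Y. finite Y \<and> Y \<subseteq> rist m G u \<and> generate (AutT m) Y = rist m G u)"

lemma rist_gens: "finite rist_gens" "rist_gens \<subseteq> rist m G u" "generate (AutT m) rist_gens = rist m G u"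
  using someI_ex[OF rist_fin_gen[OF u_tree, unfolded fin_gen_def]] unfolding rist_gens_def by auto

definition diag_subgroup :: "(nat list \<Rightarrow> nat list) set" where
  "diag_subgroup = generate (AutT m) (insert a (diag ` rist_gens))"

lemma diag_subgroup_gens: "insert a (diag ` rist_gens) \<subseteq> G"
  using a_mem diag_mem rist_gens(2) by auto

lemma subgroup_AutT_diag_subgroup: "subgroup diag_subgroup (AutT m)"
  unfolding diag_subgroup_def
  by (rule group.generate_is_subgroup[OF group_AutT]) (use diag_subgroup_gens mem_is_aut in auto)

lemma diag_subgroup_subset: "diag_subgroup \<subseteq> G"
  unfolding diag_subgroup_def using group.generate_subgroup_incl[OF group_AutT diag_subgroup_gens subgroup_G] .

lemma subgroup_diag_subgroup: "subgroup diag_subgroup (grp m G)"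
  using subgroup_AutT_imp_subgroup_grp[OF subgroup_AutT_diag_subgroup diag_subgroup_subset] .

lemma fin_gen_diag_subgroup: "fin_gen m diag_subgroup"
  unfolding fin_gen_def diag_subgroup_def
proof (intro exI conjI)
  show "finite (insert a (diag ` rist_gens))" using rist_gens(1) by simp
qed (auto intro: generate.incl)

lemma apow_in_diag_subgroup: "apow i \<in> diag_subgroup"
proof (induct i)
  case 0
  then show ?case using subgroup.one_closed[OF subgroup_AutT_diag_subgroup] by (simp add: id_def)
next
  case (Suc i)
  have "a \<in> diag_subgroup" unfolding diag_subgroup_def by (blast intro: generate.incl)
  moreover have "apow (Suc i) = apow i \<circ> a" using apow_add[of i 1] apow_1 by simp
  ultimately show ?case
    using subgroup.m_closed[OF subgroup_AutT_diag_subgroup Suc] by (simp only: AutT_mult)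
qed

lemma diag_in_diag_subgroup:
  assumes "q \<in> rist m G u"
  shows "diag q \<in> diag_subgroup"
proof -
  have "q \<in> generate (AutT m) rist_gens" using assms rist_gens(3) by simp
  then show ?thesis
  proof (induct q rule: generate.induct)
    case one
    then show ?case using diag_id subgroup.one_closed[OF subgroup_AutT_diag_subgroup] by (simp add: id_def)
  next
    case (incl h)
    then show ?case unfolding diag_subgroup_def by (blast intro: generate.incl)
  next
    case (inv h)
    then have "diag h \<in> diag_subgroup" unfolding diag_subgroup_def by (blast intro: generate.incl)
    then show ?case
      using diag_inv[of h] inv rist_gens(2) subgroup.m_inv_closed[OF subgroup_AutT_diag_subgroup] by auto
  next
    case (eng h1 h2)
    then have "diag (h1 \<circ> h2) = diag h1 \<circ> diag h2" using diag_comp rist_gens(3) by simp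
    then show ?case using subgroup.m_closed[OF subgroup_AutT_diag_subgroup eng(2,4)] by (simp only: AutT_mult)
  qed
qed

text \<open>\<open>h\<close> maps the subtree below \<open>apow i u\<close> onto the one below \<open>apow (i + j) u\<close>, acting as \<open>q\<close> in the
  coordinates transported from the subtree below \<open>u\<close> by \<open>apow\<close>.\<close>

definition shifted_diagonal :: "(nat list \<Rightarrow> nat list) set" where
  "shifted_diagonal = {h. \<exists>j q. q \<in> rist m G u \<and>
     (\<forall>i<p. \<forall>w. w \<in> tree m \<and> desc u w \<longrightarrow> h (apow i w) = apow (i + j) (q w))}"

lemma shifted_diagonal_comp:
  assumes "h1 \<in> shifted_diagonal" "h2 \<in> shifted_diagonal"
  shows "h1 \<circ> h2 \<in> shifted_diagonal"
proof -
  obtain j1 q1 where q1: "q1 \<in> rist m G u"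
    and h1: "\<And>i w. i < p \<Longrightarrow> w \<in> tree m \<Longrightarrow> desc u w \<Longrightarrow> h1 (apow i w) = apow (i + j1) (q1 w)"
    using assms(1) unfolding shifted_diagonal_def by blast
  obtain j2 q2 where q2: "q2 \<in> rist m G u"
    and h2: "\<And>i w. i < p \<Longrightarrow> w \<in> tree m \<Longrightarrow> desc u w \<Longrightarrow> h2 (apow i w) = apow (i + j2) (q2 w)"
    using assms(2) unfolding shifted_diagonal_def by blast
  have "(h1 \<circ> h2) (apow i w) = apow (i + (j1 + j2)) ((q1 \<circ> q2) w)"
    if i: "i < p" and w: "w \<in> tree m" "desc u w" for i w
  proof -
    have q2w: "q2 w \<in> tree m" "desc u (q2 w)"
      using rist_desc[OF q2 w] is_aut_in_tree[OF rist_is_aut[OF q2] w(1)] by auto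
    have "(h1 \<circ> h2) (apow i w) = h1 (apow ((i + j2) mod p) (q2 w))"
      using h2[OF i w] apow_mod by simp
    also have "\<dots> = apow ((i + j2) mod p + j1) (q1 (q2 w))"
      using h1[OF _ q2w] p_gt_1 by simp
    also have "\<dots> = apow (i + (j1 + j2)) (q1 (q2 w))"
      using apow_add[of "(i + j2) mod p" j1] apow_add[of "i + j2" j1] apow_mod[of "i + j2"]
      by (simp add: ac_simps)
    finally show ?thesis by simp
  qed
  then show ?thesis using rist_comp[OF q1 q2] unfolding shifted_diagonal_def by blast
qed

lemma apow_shifted_diagonal: "apow k \<in> shifted_diagonal"
proof -
  have "apow k (apow i w) = apow (i + k) (id w)" for i w
    using apow_add[of k i] by (simp add: add.commute)
  then show ?thesis using rist_id unfolding shifted_diagonal_def by blast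
qed

lemma diag_shifted_diagonal:
  assumes "q \<in> rist m G u"
  shows "diag q \<in> shifted_diagonal"
proof -
  have "\<forall>i<p. \<forall>w. w \<in> tree m \<and> desc u w \<longrightarrow> diag q (apow i w) = apow (i + 0) (q w)"
    using diag_apply[OF assms] by simp
  then show ?thesis using assms unfolding shifted_diagonal_def by blast
qed

lemma diag_subgroup_shifted_diagonal: "diag_subgroup \<subseteq> shifted_diagonal"
proof
  fix h assume "h \<in> diag_subgroup"
  then show "h \<in> shifted_diagonal" unfolding diag_subgroup_def
  proof (induct h rule: generate.induct)
    case one
    then show ?case using apow_shifted_diagonal[of 0] by (simp add: id_def)
  next
    case (incl h)
    then show ?case using apow_shifted_diagonal[of 1] apow_1 diag_shifted_diagonal rist_gens(2) by auto
  next
    case (inv h)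
    then consider "h = a" | y where "y \<in> rist_gens" "h = diag y" by blast
    then show ?case
    proof cases
      case 1
      then show ?thesis using AutT_inv_apow[of 1] apow_1 p_gt_1 apow_shifted_diagonal by simp
    next
      case 2
      then have "y \<in> rist m G u" using rist_gens(2) by blast
      then show ?thesis using 2 diag_inv diag_shifted_diagonal rist_inv by metis
    qed
  next
    case (eng h1 h2)
    then show ?case using shifted_diagonal_comp by (simp only: AutT_mult)
  qed
qed

lemma shifted_diagonal_agreeing_with_rist:
  assumes h: "h \<in> shifted_diagonal" and k: "k \<in> rist m G u"
    and agree: "\<And>i w. i < p \<Longrightarrow> w \<in> tree m \<Longrightarrow> desc u w \<Longrightarrow> k (apow i w) = h (apow i w)"
  shows "k = id"
proof -
  obtain j q where q: "q \<in> rist m G u"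
    and hq: "\<And>i w. i < p \<Longrightarrow> w \<in> tree m \<Longrightarrow> desc u w \<Longrightarrow> h (apow i w) = apow (i + j) (q w)"
    using h unfolding shifted_diagonal_def by blast
  have "apow 1 u \<noteq> u" using orbit_free[of 1] p_gt_1 by (simp add: apow_def)
  then have k_fixes: "k (apow 1 w) = apow 1 w" if "w \<in> tree m" "desc u w" for w
    using rist_fixes[OF k] apow_desc[OF that] not_desc_both[OF apow_u_length] by blast
  have shift_1: "apow 1 (apow j (q w)) = apow 1 w" if "w \<in> tree m" "desc u w" for w
    using agree[OF p_gt_1 that] hq[OF p_gt_1 that] k_fixes[OF that] apow_add[of 1 j] by simp
  have "apow j u = u"
    using shift_1[OF u_tree desc_refl] rist_fixes_root[OF q u_tree] is_aut_inj[OF apow_is_aut]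
    by (metis injD)
  then have j: "apow j = id" using apow_fixes_u_imp_id by blast
  have "k w = w" if "w \<in> tree m" "desc u w" for w
  proof -
    have "q w = w" using shift_1[OF that] j is_aut_inj[OF apow_is_aut] by (metis id_apply injD)
    then show ?thesis using agree[of 0 w] hq[of 0 w] p_gt_1 that j by simp
  qed
  then show ?thesis using rist_moves_desc[OF k] by blast
qed

lemma diag_in_normal:
  assumes K: "subgroup K (grp m G)" and N: "N \<lhd> grp m K"
    and apow_K: "\<And>i. apow i \<in> K" and t: "t \<in> N" "t \<in> rist m G u"
  shows "diag t \<in> N"
proof -
  note N_closed = normal_grp_closed[OF K N]
  have "conj_apow t l \<in> N" if "l \<le> p" for l
    using N_closed(4)[OF apow_K[of l] t(1)] AutT_inv_apow[OF that] by (simp add: conj_apow_def)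
  then have "n \<le> p \<Longrightarrow> compose_upto (conj_apow t) n \<in> N" for n
    by (induct n) (simp_all add: N_closed(2,5))
  then show ?thesis by (simp add: diag_def)
qed

text \<open>If \<open>n\<close> moved \<open>v\<close>, then \<open>normal_meets_rist\<close> and conjugation by a power of \<open>a\<close> would give
  some \<open>t \<noteq> id\<close> in \<open>N \<inter> rist m G u\<close>, and \<open>diag t \<noteq> id\<close> would lie in \<open>N\<close> and in the
  diagonal subgroup.\<close>

lemma normal_fixes_orbit_subtrees:
  assumes K: "subgroup K (grp m G)" "finite_index m G K" "diag_subgroup \<subseteq> K"
    and N: "N \<lhd> grp m K" and N_diag: "\<And>x. x \<in> N \<Longrightarrow> x \<in> diag_subgroup \<Longrightarrow> x = id"
    and n: "n \<in> N" and v: "v \<in> tree m" "desc (apow i u) v" "i < p"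
  shows "n v = v"
proof (rule ccontr)
  assume "n v \<noteq> v"
  then obtain t where t: "t \<in> N" "t \<in> rist m G v" "t \<noteq> id"
    using normal_meets_rist[OF K(1,2) N n v(1)] by blast
  have apow_K: "apow l \<in> K" for l using apow_in_diag_subgroup K(3) by blast
  define t' where "t' = apow (p - i) \<circ> t \<circ> inv\<^bsub>AutT m\<^esub> (apow (p - i))"
  have t'_N: "t' \<in> N" using normal_grp_closed(4)[OF K(1) N apow_K t(1)] t'_def by simp
  have t'_rist: "t' \<in> rist m G u"
  proof -
    have "desc u (apow (p - i) v)" using desc_orbit_vertex[OF v(1,2)] v(3) by simp
    then show ?thesis
      using rist_conj[OF apow_mem t(2)] rist_antimono t'_def by blast
  qed
  have "t' \<noteq> id"
  proof
    assume "t' = id"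
    have "apow (p - i) (t y) = apow (p - i) y" for y
    proof -
      have "t' (apow (p - i) y) = apow (p - i) y" using \<open>t' = id\<close> by simp
      then show ?thesis using AutT_inv_apply_left[OF apow_is_aut] by (simp add: t'_def)
    qed
    then have "t y = y" for y using is_aut_inj[OF apow_is_aut] by (meson injD)
    then show False using t(3) by auto
  qed
  then obtain w where w: "w \<in> tree m" "desc u w" "t' w \<noteq> w"
    using rist_moves_desc[OF t'_rist] by blast
  have "diag t' \<in> N" using diag_in_normal[OF K(1) N apow_K t'_N t'_rist] .
  then have "diag t' = id" using N_diag diag_in_diag_subgroup[OF t'_rist] by blast
  then show False
    using diag_apply[OF t'_rist _ w(1,2), of 0] p_gt_1 w(3) by simp
qed

lemma agree_below_orbit_mod_normal:
  assumes K: "subgroup K (grp m G)" "finite_index m G K" "diag_subgroup \<subseteq> K"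
    and N: "N \<lhd> grp m K" and N_diag: "\<And>x. x \<in> N \<Longrightarrow> x \<in> diag_subgroup \<Longrightarrow> x = id"
    and h: "h \<in> diag_subgroup" and kh: "k \<circ> inv\<^bsub>AutT m\<^esub> h \<in> N"
    and i: "i < p" and w: "w \<in> tree m" "desc u w"
  shows "k (apow i w) = h (apow i w)"
proof -
  obtain j q where q: "q \<in> rist m G u"
    and hq: "\<And>i w. i < p \<Longrightarrow> w \<in> tree m \<Longrightarrow> desc u w \<Longrightarrow> h (apow i w) = apow (i + j) (q w)"
    using h diag_subgroup_shifted_diagonal unfolding shifted_diagonal_def by blast
  have qw: "q w \<in> tree m" "desc u (q w)"
    using rist_desc[OF q w] is_aut_in_tree[OF rist_is_aut[OF q] w(1)] by auto
  define l where "l = (i + j) mod p"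
  have "h (apow i w) = apow l (q w)" using hq[OF i w] apow_mod l_def by simp
  moreover have "l < p" using p_gt_1 l_def by simp
  ultimately have "(k \<circ> inv\<^bsub>AutT m\<^esub> h) (h (apow i w)) = h (apow i w)"
    using normal_fixes_orbit_subtrees[OF K N N_diag kh, of "apow l (q w)" l] apow_desc[OF qw] by simp
  then show ?thesis
    using AutT_inv_apply_left[OF mem_is_aut] h diag_subgroup_subset by auto
qed

text \<open>For a retraction \<open>r\<close> and \<open>k \<in> K \<inter> rist m G u\<close>, the element \<open>k \<circ> inv (r k)\<close> lies in the kernel
  of \<open>r\<close>, which meets the diagonal subgroup trivially; so \<open>r k\<close> agrees with \<open>k\<close> below the orbit.\<close>

lemma diag_subgroup_not_virtual_retract: "\<not> virtual_retract m G diag_subgroup"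
proof
  assume "virtual_retract m G diag_subgroup"
  then obtain K r where K: "subgroup K (grp m G)" "diag_subgroup \<subseteq> K" "finite_index m G K"
    and r: "r \<in> hom (grp m K) (grp m diag_subgroup)" and r_id: "\<And>h. h \<in> diag_subgroup \<Longrightarrow> r h = h"
    unfolding virtual_retract_def by blast
  interpret r: group_hom "grp m K" "grp m diag_subgroup" r
    using group_grp[OF K(1)] group_grp[OF subgroup_diag_subgroup] r
    by (simp add: group_hom_def group_hom_axioms_def)
  define N where "N = kernel (grp m K) (grp m diag_subgroup) r"
  have N_normal: "N \<lhd> grp m K" using r.normal_kernel N_def by simp
  have N_iff: "x \<in> N \<longleftrightarrow> x \<in> K \<and> r x = id" for x
    by (simp add: N_def kernel_def grp_def AutT_def)
  obtain k where k: "k \<in> K" "k \<in> rist m G u" "k \<noteq> id"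
    using finite_index_meets_rist[OF K(1,3) u_tree] by blast
  have h: "r k \<in> diag_subgroup" using r.hom_closed k(1) by (simp add: grp_def AutT_def)
  have ih: "inv\<^bsub>AutT m\<^esub> (r k) \<in> diag_subgroup"
    using subgroup.m_inv_closed[OF subgroup_AutT_diag_subgroup h] .
  have "r (k \<circ> inv\<^bsub>AutT m\<^esub> (r k)) = r k \<circ> inv\<^bsub>AutT m\<^esub> (r k)"
    using r.hom_mult k(1) ih K(2) r_id[OF ih] by (auto simp: grp_def AutT_def)
  moreover have "r k \<circ> inv\<^bsub>AutT m\<^esub> (r k) = id"
    using AutT_inv_comp_right[OF mem_is_aut] h diag_subgroup_subset by blast
  moreover have "k \<circ> inv\<^bsub>AutT m\<^esub> (r k) \<in> K"
    using subgroup.m_closed[OF subgroup_grp_imp_subgroup_AutT[OF K(1)] k(1)] ih K(2) by auto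
  ultimately have "k \<circ> inv\<^bsub>AutT m\<^esub> (r k) \<in> N" using N_iff by simp
  moreover have N_diag: "x = id" if "x \<in> N" "x \<in> diag_subgroup" for x
    using N_iff r_id that by metis
  ultimately have "k (apow i w) = r k (apow i w)" if "i < p" "w \<in> tree m" "desc u w" for i w
    using agree_below_orbit_mod_normal[OF K(1,3,2) N_normal N_diag h _ that] by blast
  then have "k = id"
    using shifted_diagonal_agreeing_with_rist[OF subsetD[OF diag_subgroup_shifted_diagonal h] k(2)]
    by blast
  then show False using k(3) by simp
qed

end

theorem lemma3p2:
  fixes m :: "nat \<Rightarrow> nat" and G :: "(nat list \<Rightarrow> nat list) set"
  assumes "\<And>n. m n \<ge> 2"
    and "subgroup G (AutT m)"
    and "fin_gen m G"
    and "branch m G"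
    and "\<exists>g\<in>G. g \<noteq> \<one>\<^bsub>AutT m\<^esub> \<and> (\<exists>k::nat. k > 0 \<and> g [^]\<^bsub>AutT m\<^esub> k = \<one>\<^bsub>AutT m\<^esub>)"
  shows "\<not> LR m G"
proof
  assume LR: "LR m G"
  interpret fg_branch_group m G
    using assms(1-4)
    by (simp add: fg_branch_group_def fg_branch_group_axioms_def branch_group_def
        branch_group_axioms_def aut_subgroup_def)
  obtain g k where g: "g \<in> G" "g \<noteq> id" "(k::nat) > 0" "g [^]\<^bsub>AutT m\<^esub> k = id"
    using assms(5) by auto
  obtain j p where p: "Factorial_Ring.prime (p::nat)" "g [^]\<^bsub>AutT m\<^esub> (j::nat) \<noteq> id"
    "(g [^]\<^bsub>AutT m\<^esub> j) [^]\<^bsub>AutT m\<^esub> p = id"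
    by (rule group.exists_pow_prime_order[OF group_AutT, of g m k]) (use g mem_is_aut in auto)
  define a where "a = g [^]\<^bsub>AutT m\<^esub> j"
  have a: "a \<in> G" using pow_mem[OF g(1)] a_def by simp
  obtain u where "u \<in> tree m" "\<And>i. 0 < i \<Longrightarrow> i < p \<Longrightarrow> (a [^]\<^bsub>AutT m\<^esub> i) u \<noteq> u"
    using prime_order_free_orbit[OF mem_is_aut[OF a] _ p(1)] p(2,3) a_def by auto
  then interpret torsion_vertex m G a p u
    using a p(1,3) prime_gt_1_nat a_def by unfold_locales auto
  have "virtual_retract m G diag_subgroup"
    using LR subgroup_diag_subgroup fin_gen_diag_subgroup unfolding LR_def by blast
  then show False using diag_subgroup_not_virtual_retract by contradiction
qed

end
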